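(* Let $\alpha,\beta>0$, let $g(n)=\sum_{i=0}^kc_in^i$ with $k\ge0$ and $c_k\ne0$, let $x$ satisfy $x(n)=\alpha\,x(\lfloor n/2\rfloor)+\beta\,x(\lceil n/2\rceil)+g(n)$ for $n\ge2$ with given $x(1)$, set $x(0)\coloneqq0$, $h(n)\coloneqq x(n+1)-x(n)$, $d_0\coloneqq(1-\beta)x(1)-g(1)+g(0)$, $d_1\coloneqq g(1)-(1-\beta)x(1)$. For $0\le i,j<k$ put \[b_{0j}=\sum_{i=j+1}^k\binom ij2^jc_i,\quad b_{1j}=\sum_{i=j+1}^k\binom ij(2^i-2^j)c_i,\quad a_{0ij}=[j=i]2^i,\quad a_{1ij}=\binom ij2^j,\] and for $r\in\{0,1\}$ let $b_r=(b_{r(k-1)},\dots,b_{r0})$ (a row vector), $\widetilde A_r=(a_{rij})_{i=k-1,\dots,0;\ j=k-1,\dots,0}$ (a $k\times k$ matrix with rows and columns indexed in decreasing order), $\mu_0=\beta$, $\mu_1=\alpha$, and \[A_r=\begin{pmatrix}\mu_r&b_r&d_r\\0&\widetilde A_r&0\\0&0&[r=0]\end{pmatrix}\in\mathbb{C}^{(k+2)\times(k+2)}.\] Let $u=(1,0,\dots,0)\in\mathbb{C}^{1\times(k+2)}$ and $w=(x(1),0,\dots,0,1,1)^\top$ if $k\ge1$, $w=(x(1),1)^\top$ if $k=0$. Then $(u,(A_0,A_1),w)$ is a linear representation of the $2$-regular sequence $h$, with associated right vector-valued sequence $n\mapsto(h(n),n^{k-1},\dots,n,1,\delta_0(n))^\top$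 where $\delta_0(n)=[n=0]$. If moreover $d_0=d_1=0$, then removing the last column of $u$, the last row and column of $A_0$ and $A_1$, and the last row of $w$ also yields a linear representation of $h$.
   Context: A sequence $x\in\mathbb{C}^{\mathbb{N}_0}$ is $q$-regular if there are $D\ge0$, $D\times D$ complex matrices $A_0,\dots,A_{q-1}$, $u\in\mathbb{C}^{1\times D}$ and $v\in(\mathbb{C}^{D\times1})^{\mathbb{N}_0}$ with $x(n)=uv(n)$ and $v(qn+r)=A_rv(n)$ for all $0\le r<q$, $n\ge0$; $(u,A,v(0))$ is a linear representation and $v$ the associated right vector-valued sequence. Iverson's bracket: $[S]=1$ if $S$ is true and $0$ otherwise; $\binom ij=0$ for $j>i$. *)

theory Defs
  imports "Jordan_Normal_Form.Matrix"
begin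

text \<open>Linear representation of a q-regular sequence (Jordan_Normal_Form vectors/matrices).
  The row vector u is a vector of dimension D; u v(n) is the (bilinear) scalar product.\<close>
definition linear_representation ::
  "nat \<Rightarrow> nat \<Rightarrow> complex vec \<Rightarrow> (nat \<Rightarrow> complex mat) \<Rightarrow> complex vec \<Rightarrow> (nat \<Rightarrow> complex) \<Rightarrow> bool" where
  "linear_representation q D u A w s \<longleftrightarrow>
     u \<in> carrier_vec D \<and> w \<in> carrier_vec D \<and> (\<forall>r<q. A r \<in> carrier_mat D D) \<and>
     (\<exists>v. v 0 = w \<and> (\<forall>n. v n \<in> carrier_vec D) \<and>
          (\<forall>r<q. \<forall>n. v (q * n + r) = A r *\<^sub>v v n) \<and> (\<forall>n. s n = u \<bullet> v n))"

definition linear_representation_with ::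
  "nat \<Rightarrow> nat \<Rightarrow> complex vec \<Rightarrow> (nat \<Rightarrow> complex mat) \<Rightarrow> complex vec \<Rightarrow> (nat \<Rightarrow> complex vec) \<Rightarrow> (nat \<Rightarrow> complex) \<Rightarrow> bool" where
  "linear_representation_with q D u A w v s \<longleftrightarrow>
     u \<in> carrier_vec D \<and> w \<in> carrier_vec D \<and> (\<forall>r<q. A r \<in> carrier_mat D D) \<and>
     v 0 = w \<and> (\<forall>n. v n \<in> carrier_vec D) \<and>
     (\<forall>r<q. \<forall>n. v (q * n + r) = A r *\<^sub>v v n) \<and> (\<forall>n. s n = u \<bullet> v n)"

definition iv :: "bool \<Rightarrow> complex" where "iv P = (if P then 1 else 0)"

definition gpol :: "(nat \<Rightarrow> complex) \<Rightarrow> nat \<Rightarrow> nat \<Rightarrow> complex" where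
  "gpol c k n = (\<Sum>i\<le>k. c i * of_nat n ^ i)"

definition bco :: "(nat \<Rightarrow> complex) \<Rightarrow> nat \<Rightarrow> nat \<Rightarrow> nat \<Rightarrow> complex" where
  "bco c k r j = (if r = 0 then (\<Sum>i\<in>{j+1..k}. of_nat (i choose j) * 2 ^ j * c i)
                  else (\<Sum>i\<in>{j+1..k}. of_nat (i choose j) * (2 ^ i - 2 ^ j) * c i))"

definition aco :: "nat \<Rightarrow> nat \<Rightarrow> nat \<Rightarrow> complex" where
  "aco r i j = (if r = 0 then iv (j = i) * 2 ^ i else of_nat (i choose j) * 2 ^ j)"

definition dco :: "real \<Rightarrow> (nat \<Rightarrow> complex) \<Rightarrow> nat \<Rightarrow> complex \<Rightarrow> nat \<Rightarrow> complex" where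
  "dco \<beta> c k x1 r = (if r = 0 then (1 - of_real \<beta>) * x1 - gpol c k 1 + gpol c k 0
                     else gpol c k 1 - (1 - of_real \<beta>) * x1)"

definition mu :: "real \<Rightarrow> real \<Rightarrow> nat \<Rightarrow> complex" where
  "mu \<alpha> \<beta> r = (if r = 0 then of_real \<beta> else of_real \<alpha>)"

text \<open>The (k+2)x(k+2) matrix A_r. Index 0: the h-component; index p (1<=p<=k):
  corresponds to j = k - p (decreasing order k-1,...,0); index k+1: the delta_0 component.\<close>
definition Amat :: "real \<Rightarrow> real \<Rightarrow> (nat \<Rightarrow> complex) \<Rightarrow> nat \<Rightarrow> complex \<Rightarrow> nat \<Rightarrow> complex mat" where
  "Amat \<alpha> \<beta> c k x1 r = mat (k+2) (k+2) (\<lambda>(p,q).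
     if p = 0 then (if q = 0 then mu \<alpha> \<beta> r else if q \<le> k then bco c k r (k - q) else dco \<beta> c k x1 r)
     else if p \<le> k then (if 1 \<le> q \<and> q \<le> k then aco r (k - p) (k - q) else 0)
     else (if q = k + 1 then iv (r = 0) else 0))"

definition uvec :: "nat \<Rightarrow> complex vec" where
  "uvec k = vec (k+2) (\<lambda>p. iv (p = 0))"

definition wvec :: "nat \<Rightarrow> complex \<Rightarrow> complex vec" where
  "wvec k x1 = vec (k+2) (\<lambda>p. if p = 0 then x1 else if p < k then 0 else 1)"

definition Vseq :: "nat \<Rightarrow> (nat \<Rightarrow> complex) \<Rightarrow> nat \<Rightarrow> complex vec" where
  "Vseq k h n = vec (k+2) (\<lambda>p. if p = 0 then h n else if p \<le> k then of_nat n ^ (k - p) else iv (n = 0))"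

definition drop_last_vec :: "complex vec \<Rightarrow> complex vec" where
  "drop_last_vec v = vec (dim_vec v - 1) (\<lambda>i. v $ i)"

definition drop_last_mat :: "complex mat \<Rightarrow> complex mat" where
  "drop_last_mat M = mat (dim_row M - 1) (dim_col M - 1) (\<lambda>(i,j). M $$ (i,j))"

end

theory Submission
  imports Defs
begin

text \<open>For \<open>n \<ge> 1\<close> the recurrence gives \<open>h(2n+r) = \<mu>\<^sub>r h(n) + g(2n+r+1) - g(2n+r)\<close>, and by the
  binomial theorem the difference of \<open>g\<close> is the polynomial \<open>\<Sum>\<^sub>j b\<^sub>r\<^sub>j n\<^sup>j\<close> of degree \<open>< k\<close>;
  the monomials transform linearly as well, \<open>(2n+r)\<^sup>i = \<Sum>\<^sub>j a\<^sub>r\<^sub>i\<^sub>j n\<^sup>j\<close>. At \<open>n = 0\<close> the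
  recurrence does not apply and the discrepancy is exactly \<open>d\<^sub>r\<close>, which the last component
  \<open>\<delta>\<^sub>0\<close> supplies, since \<open>\<delta>\<^sub>0(2n+r) = [r=0] \<delta>\<^sub>0(n)\<close>. When \<open>d\<^sub>0 = d\<^sub>1 = 0\<close> the last column of
  both matrices vanishes, so this component can be removed.\<close>

lemma power_two_mult_plus_one:
  "(2 * y + 1 :: 'a::comm_semiring_1) ^ i = (\<Sum>j\<le>i. of_nat (i choose j) * 2 ^ j * y ^ j)"
  by (subst binomial_ring) (simp add: power_mult_distrib mult.assoc)

lemma power_two_mult_plus_one_diff:
  "(2 * y + 1 :: 'a::comm_ring_1) ^ i - (2 * y) ^ i = (\<Sum>j<i. of_nat (i choose j) * 2 ^ j * y ^ j)"
  by (simp add: power_two_mult_plus_one lessThan_Suc_atMost[symmetric] power_mult_distrib)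

lemma power_two_mult_plus_two_diff:
  "(2 * y + 2 :: 'a::comm_ring_1) ^ i - (2 * y + 1) ^ i
     = (\<Sum>j<i. of_nat (i choose j) * (2 ^ i - 2 ^ j) * y ^ j)"
proof -
  have "(2 * y + 2) ^ i = 2 ^ i * (y + 1) ^ i"
    by (simp add: power_mult_distrib[symmetric] algebra_simps)
  also have "\<dots> = (\<Sum>j\<le>i. of_nat (i choose j) * 2 ^ i * y ^ j)"
    by (subst binomial_ring) (simp add: sum_distrib_left algebra_simps)
  finally have "(2 * y + 2) ^ i - (2 * y + 1) ^ i
      = (\<Sum>j\<le>i. of_nat (i choose j) * (2 ^ i - 2 ^ j) * y ^ j)"
    unfolding power_two_mult_plus_one by (simp add: sum_subtractf[symmetric] algebra_simps)
  then show ?thesis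
    by (simp add: lessThan_Suc_atMost[symmetric])
qed

lemma sum_atMost_sum_lessThan_swap:
  fixes c :: "nat \<Rightarrow> 'a::comm_semiring_1"
  shows "(\<Sum>i\<le>k. c i * (\<Sum>j<i. e i j * y ^ j)) = (\<Sum>j<k. (\<Sum>i\<in>{j+1..k}. e i j * c i) * y ^ j)"
proof -
  have "(\<Sum>i\<le>k. c i * (\<Sum>j<i. e i j * y ^ j)) = (\<Sum>i\<le>k. \<Sum>j<i. c i * (e i j * y ^ j))"
    by (simp add: sum_distrib_left)
  also have "\<dots> = (\<Sum>j<k. \<Sum>i\<in>{Suc j..k}. c i * (e i j * y ^ j))"
    by (rule sum.nested_swap')
  also have "\<dots> = (\<Sum>j<k. (\<Sum>i\<in>{j+1..k}. e i j * c i) * y ^ j)"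
    by (simp add: sum_distrib_left sum_distrib_right mult_ac)
  finally show ?thesis .
qed

lemma gpol_diff:
  assumes "r < 2"
  shows "gpol c k (2 * n + r + 1) - gpol c k (2 * n + r) = (\<Sum>j<k. bco c k r j * of_nat n ^ j)"
proof -
  have "r = 0 \<or> r = 1" using assms by auto
  then show ?thesis
  proof
    assume "r = 0"
    have "gpol c k (2 * n + 1) - gpol c k (2 * n)
        = (\<Sum>i\<le>k. c i * ((2 * of_nat n + 1) ^ i - (2 * of_nat n) ^ i))"
      by (simp add: gpol_def sum_subtractf[symmetric] algebra_simps)
    also have "\<dots> = (\<Sum>j<k. bco c k 0 j * of_nat n ^ j)"
      unfolding power_two_mult_plus_one_diff sum_atMost_sum_lessThan_swap by (simp add: bco_def)
    finally show ?thesis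
      using \<open>r = 0\<close> by simp
  next
    assume "r = 1"
    have "gpol c k (2 * n + 2) - gpol c k (2 * n + 1)
        = (\<Sum>i\<le>k. c i * ((2 * of_nat n + 2) ^ i - (2 * of_nat n + 1) ^ i))"
      by (simp add: gpol_def sum_subtractf[symmetric] algebra_simps)
    also have "\<dots> = (\<Sum>j<k. bco c k 1 j * of_nat n ^ j)"
      unfolding power_two_mult_plus_two_diff sum_atMost_sum_lessThan_swap by (simp add: bco_def)
    finally show ?thesis
      using \<open>r = 1\<close> by simp
  qed
qed

lemma first_difference_rec:
  fixes x :: "nat \<Rightarrow> complex"
  assumes x0: "x 0 = 0"
    and rec: "\<And>n. n \<ge> 2 \<Longrightarrow> x n = of_real \<alpha> * x (n div 2) + of_real \<beta> * x ((n + 1) div 2) + gpol c k n"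
    and r: "r < 2"
  shows "x (2 * n + r + 1) - x (2 * n + r)
    = mu \<alpha> \<beta> r * (x (n + 1) - x n) + (\<Sum>j<k. bco c k r j * of_nat n ^ j) + dco \<beta> c k (x 1) r * iv (n = 0)"
proof -
  let ?g = "gpol c k"
  have rec_2n: "x (2 * n) = of_real \<alpha> * x n + of_real \<beta> * x n + ?g (2 * n)"
    if "n \<ge> 1" for n
    using rec[of "2 * n"] that by simp
  have rec_2n1: "x (2 * n + 1) = of_real \<alpha> * x n + of_real \<beta> * x (n + 1) + ?g (2 * n + 1)"
    if "n \<ge> 1" for n
    using rec[of "2 * n + 1"] that by simp
  have rec_2n2: "x (2 * n + 2) = of_real \<alpha> * x (n + 1) + of_real \<beta> * x (n + 1) + ?g (2 * n + 2)" for n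
    using rec[of "2 * n + 2"] by simp
  have "r = 0 \<or> r = 1" using r by auto
  moreover have "n = 0 \<or> n \<ge> 1" by auto
  ultimately show ?thesis
    unfolding gpol_diff[OF r, symmetric]
    using x0 rec_2n rec_2n1 rec_2n2[of n]
    by (auto simp: mu_def dco_def iv_def algebra_simps)
qed

lemma sum_lessThan_add2_split:
  fixes f :: "nat \<Rightarrow> 'a::comm_monoid_add"
  shows "(\<Sum>q<k+2. f q) = f 0 + (\<Sum>j<k. f (k - j)) + f (k + 1)"
proof -
  have "(\<Sum>q<k+2. f q) = f 0 + (\<Sum>q<k. f (Suc q)) + f (k + 1)"
    using sum.lessThan_Suc_shift[of f k] by simp
  also have "(\<Sum>q<k. f (Suc q)) = (\<Sum>j<k. f (k - j))"
    by (rule sum.reindex_bij_witness[where i="\<lambda>j. k - Suc j" and j="\<lambda>j. k - Suc j"]) auto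
  finally show ?thesis .
qed

lemma Amat_mult_Vseq:
  "Amat \<alpha> \<beta> c k x1 r *\<^sub>v Vseq k h n = vec (k+2) (\<lambda>p.
     if p = 0 then mu \<alpha> \<beta> r * h n + (\<Sum>j<k. bco c k r j * of_nat n ^ j) + dco \<beta> c k x1 r * iv (n = 0)
     else if p \<le> k then (\<Sum>j<k. aco r (k - p) j * of_nat n ^ j)
     else iv (r = 0) * iv (n = 0))" (is "?A *\<^sub>v ?V = ?rhs")
proof (rule eq_vecI)
  fix p assume "p < dim_vec ?rhs"
  then have p: "p < k + 2" by simp
  have "(?A *\<^sub>v ?V) $ p = (\<Sum>q<k+2. ?A $$ (p, q) * ?V $ q)"
    using p by (simp add: Amat_def Vseq_def scalar_prod_def atLeast0LessThan)
  also have "\<dots> = ?A $$ (p, 0) * h n + (\<Sum>j<k. ?A $$ (p, k - j) * of_nat n ^ j)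
      + ?A $$ (p, k + 1) * iv (n = 0)"
    unfolding sum_lessThan_add2_split by (auto intro!: sum.cong simp: Vseq_def)
  finally show "(?A *\<^sub>v ?V) $ p = ?rhs $ p"
    using p by (auto intro!: sum.cong sum.neutral simp: Amat_def)
qed (simp add: Amat_def)

lemma aco_row_eval:
  assumes "r < 2" "i < k"
  shows "(\<Sum>j<k. aco r i j * of_nat n ^ j) = (2 * of_nat n + of_nat r) ^ i"
proof -
  have "r = 0 \<or> r = 1" using assms(1) by auto
  then show ?thesis
  proof
    assume "r = 0"
    have "(\<Sum>j<k. aco r i j * of_nat n ^ j) = (\<Sum>j<k. if j = i then 2 ^ i * of_nat n ^ i else 0)"
      using \<open>r = 0\<close> by (intro sum.cong refl) (simp add: aco_def iv_def)
    then show ?thesis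
      using \<open>r = 0\<close> assms(2) by (simp add: power_mult_distrib)
  next
    assume "r = 1"
    have "(\<Sum>j<k. aco r i j * of_nat n ^ j) = (\<Sum>j\<le>i. aco r i j * of_nat n ^ j)"
      using \<open>r = 1\<close> assms(2) by (intro sum.mono_neutral_right) (auto simp: aco_def)
    then show ?thesis
      using \<open>r = 1\<close> by (simp add: power_two_mult_plus_one aco_def)
  qed
qed

lemma Vseq_step:
  assumes r: "r < 2"
    and h_rec: "h (2 * n + r) = mu \<alpha> \<beta> r * h n + (\<Sum>j<k. bco c k r j * of_nat n ^ j) + dco \<beta> c k x1 r * iv (n = 0)"
  shows "Vseq k h (2 * n + r) = Amat \<alpha> \<beta> c k x1 r *\<^sub>v Vseq k h n"
  unfolding Amat_mult_Vseq
  by (rule eq_vecI) (auto simp: Vseq_def h_rec aco_row_eval[OF r] iv_def)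

lemma linear_representation_with_Vseq:
  assumes h0: "h 0 = x1"
    and h_rec: "\<And>r n. r < 2 \<Longrightarrow>
      h (2 * n + r) = mu \<alpha> \<beta> r * h n + (\<Sum>j<k. bco c k r j * of_nat n ^ j) + dco \<beta> c k x1 r * iv (n = 0)"
  shows "linear_representation_with 2 (k+2) (uvec k) (Amat \<alpha> \<beta> c k x1) (wvec k x1) (Vseq k h) h"
proof -
  have "Vseq k h 0 = wvec k x1"
    by (rule eq_vecI) (auto simp: Vseq_def wvec_def h0 iv_def)
  moreover have "uvec k \<bullet> Vseq k h n = h n" for n
  proof -
    have "uvec k \<bullet> Vseq k h n = (\<Sum>i\<in>{0..<k+2}. if i = 0 then Vseq k h n $ i else 0)"
      unfolding scalar_prod_def by (intro sum.cong) (auto simp: uvec_def Vseq_def iv_def)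
    then show ?thesis
      by (simp add: Vseq_def)
  qed
  ultimately show ?thesis
    unfolding linear_representation_with_def
    using Vseq_step[OF _ h_rec] by (auto simp: uvec_def wvec_def Amat_def Vseq_def)
qed

lemma drop_last_mat_mult_vec:
  assumes M: "M \<in> carrier_mat (Suc m) (Suc m)" and v: "v \<in> carrier_vec (Suc m)"
    and last_col: "\<And>i. i < m \<Longrightarrow> M $$ (i, m) = 0"
  shows "drop_last_vec (M *\<^sub>v v) = drop_last_mat M *\<^sub>v drop_last_vec v"
proof (rule eq_vecI)
  fix i assume "i < dim_vec (drop_last_mat M *\<^sub>v drop_last_vec v)"
  then have i: "i < m" using M by (simp add: drop_last_mat_def)
  have "drop_last_vec (M *\<^sub>v v) $ i = (\<Sum>j\<in>{0..<Suc m}. M $$ (i, j) * v $ j)"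
    using M v i by (simp add: drop_last_vec_def scalar_prod_def)
  also have "\<dots> = (\<Sum>j\<in>{0..<m}. M $$ (i, j) * v $ j)"
    using last_col[OF i] by simp
  also have "\<dots> = (drop_last_mat M *\<^sub>v drop_last_vec v) $ i"
    using M v i by (simp add: drop_last_vec_def drop_last_mat_def scalar_prod_def)
  finally show "drop_last_vec (M *\<^sub>v v) $ i = (drop_last_mat M *\<^sub>v drop_last_vec v) $ i" .
qed (use M in \<open>simp add: drop_last_vec_def drop_last_mat_def\<close>)

lemma drop_last_scalar_prod:
  assumes "u \<in> carrier_vec (Suc m)" "v \<in> carrier_vec (Suc m)" "u $ m = 0"
  shows "drop_last_vec u \<bullet> drop_last_vec v = u \<bullet> v"
  using assms by (simp add: drop_last_vec_def scalar_prod_def)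

lemma linear_representation_drop_last:
  assumes rep: "linear_representation_with q (Suc m) u A w v s"
    and u_last: "u $ m = 0"
    and last_col: "\<And>r i. r < q \<Longrightarrow> i < m \<Longrightarrow> A r $$ (i, m) = 0"
  shows "linear_representation q m (drop_last_vec u) (\<lambda>r. drop_last_mat (A r)) (drop_last_vec w) s"
proof -
  have u: "u \<in> carrier_vec (Suc m)" and w: "w \<in> carrier_vec (Suc m)"
    and A: "\<And>r. r < q \<Longrightarrow> A r \<in> carrier_mat (Suc m) (Suc m)"
    and v: "\<And>n. v n \<in> carrier_vec (Suc m)" and v0: "v 0 = w"
    and step: "\<And>r n. r < q \<Longrightarrow> v (q * n + r) = A r *\<^sub>v v n"
    and s: "\<And>n. s n = u \<bullet> v n"
    using rep unfolding linear_representation_with_def by auto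
  have dim_A: "\<And>r. r < q \<Longrightarrow> dim_row (A r) = Suc m \<and> dim_col (A r) = Suc m"
    and dim_v: "\<And>n. dim_vec (v n) = Suc m"
    using A v by auto
  show ?thesis
    unfolding linear_representation_def
  proof (intro conjI allI impI exI[of _ "\<lambda>n. drop_last_vec (v n)"])
    fix r n assume r: "r < q"
    show "drop_last_vec (v (q * n + r)) = drop_last_mat (A r) *\<^sub>v drop_last_vec (v n)"
      unfolding step[OF r] by (rule drop_last_mat_mult_vec[OF A[OF r] v last_col[OF r]])
  next
    fix n
    show "s n = drop_last_vec u \<bullet> drop_last_vec (v n)"
      using s u v u_last by (simp add: drop_last_scalar_prod)
  qed (use u w v0 dim_A dim_v in \<open>auto simp: drop_last_vec_def drop_last_mat_def\<close>)
qed

lemma Amat_last_column: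
  assumes "i \<le> k"
  shows "Amat \<alpha> \<beta> c k x1 r $$ (i, k + 1) = (if i = 0 then dco \<beta> c k x1 r else 0)"
  using assms by (simp add: Amat_def)

theorem mainTheorem7:
  fixes \<alpha> \<beta> :: real and c :: "nat \<Rightarrow> complex" and k :: nat and x :: "nat \<Rightarrow> complex"
  assumes "\<alpha> > 0" and "\<beta> > 0" and "c k \<noteq> 0"
    and "x 0 = 0"
    and "\<And>n. n \<ge> 2 \<Longrightarrow> x n = of_real \<alpha> * x (n div 2) + of_real \<beta> * x ((n + 1) div 2) + gpol c k n"
  shows "linear_representation_with 2 (k+2) (uvec k) (Amat \<alpha> \<beta> c k (x 1)) (wvec k (x 1))
           (Vseq k (\<lambda>n. x (n+1) - x n)) (\<lambda>n. x (n+1) - x n)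
       \<and> (dco \<beta> c k (x 1) 0 = 0 \<and> dco \<beta> c k (x 1) 1 = 0 \<longrightarrow>
           linear_representation 2 (k+1) (drop_last_vec (uvec k))
             (\<lambda>r. drop_last_mat (Amat \<alpha> \<beta> c k (x 1) r)) (drop_last_vec (wvec k (x 1)))
             (\<lambda>n. x (n+1) - x n))"
proof -
  have rep: "linear_representation_with 2 (Suc (k+1)) (uvec k) (Amat \<alpha> \<beta> c k (x 1)) (wvec k (x 1))
      (Vseq k (\<lambda>n. x (n+1) - x n)) (\<lambda>n. x (n+1) - x n)"
    using linear_representation_with_Vseq first_difference_rec[OF assms(4,5)] assms(4)
    by simp
  moreover have "linear_representation 2 (k+1) (drop_last_vec (uvec k))
      (\<lambda>r. drop_last_mat (Amat \<alpha> \<beta> c k (x 1) r)) (drop_last_vec (wvec k (x 1))) (\<lambda>n. x (n+1) - x n)"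
    if d: "dco \<beta> c k (x 1) 0 = 0" "dco \<beta> c k (x 1) 1 = 0"
  proof (rule linear_representation_drop_last[OF rep])
    show "uvec k $ (k + 1) = 0"
      by (simp add: uvec_def iv_def)
    fix r i :: nat assume "r < 2" "i < k + 1"
    then show "Amat \<alpha> \<beta> c k (x 1) r $$ (i, k + 1) = 0"
      using d Amat_last_column[of i k \<alpha> \<beta> c "x 1" r] by (auto simp: less_2_cases_iff)
  qed
  ultimately show ?thesis
    by simp
qed

end
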